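(* For every integer $d\ge1$ there exists a hypergraph $H$ of separated $d$-intervals with $\nu(H)=1$ and $\tau(H)=\tau^*(H)=d$.
   Context: Fix $d$ pairwise disjoint copies $L_1,\dots,L_d$ of the real line. A separated $d$-interval is a set $h=h^1\cup\dots\cup h^d$ where each $h^j$ is either empty or a closed interval in $L_j$. A hypergraph of separated $d$-intervals is a finite family of separated $d$-intervals, regarded as a hypergraph on vertex set $L_1\cup\dots\cup L_d$. $\nu(H)$ is the maximum size of a set of pairwise disjoint edges; $\tau(H)$ the minimum size of a set of points meeting every edge; $\tau^*(H)$ the minimum of $\sum_v g(v)$ over finitely supported $g\ge0$ on the vertices with $\sum_{v\in h}g(v)\ge1$ for all edges $h$. *)

theory Defs
  imports Complex_Main
begin

text \<open>Vertex set: d disjoint copies L_0,...,L_(d-1) of the real line,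
  realised as pairs (j, x) with j < d.\<close>

definition vertices :: "nat \<Rightarrow> (nat \<times> real) set" where
  "vertices d = {v. fst v < d}"

definition sep_d_interval :: "nat \<Rightarrow> (nat \<times> real) set \<Rightarrow> bool" where
  "sep_d_interval d h \<longleftrightarrow> h \<subseteq> vertices d \<and>
     (\<forall>j<d. {x. (j, x) \<in> h} = {} \<or> (\<exists>a b. a \<le> b \<and> {x. (j, x) \<in> h} = {a..b}))"

definition hypergraph_sep :: "nat \<Rightarrow> (nat \<times> real) set set \<Rightarrow> bool" where
  "hypergraph_sep d H \<longleftrightarrow> finite H \<and> (\<forall>h\<in>H. sep_d_interval d h)"

definition matching_num :: "'v set set \<Rightarrow> nat" where
  "matching_num H = Max {card F | F. F \<subseteq> H \<and>
      (\<forall>e\<in>F. \<forall>f\<in>F. e \<noteq> f \<longrightarrow> e \<inter> f = {})}"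

definition cover_num :: "'v set \<Rightarrow> 'v set set \<Rightarrow> nat" where
  "cover_num V H = Inf {card T | T. T \<subseteq> V \<and> finite T \<and> (\<forall>h\<in>H. h \<inter> T \<noteq> {})}"

definition frac_cover_num :: "'v set \<Rightarrow> 'v set set \<Rightarrow> real" where
  "frac_cover_num V H = Inf {(\<Sum>v\<in>{v. g v \<noteq> 0}. g v) | g :: 'v \<Rightarrow> real.
      finite {v. g v \<noteq> 0} \<and> {v. g v \<noteq> 0} \<subseteq> V \<and> (\<forall>v. g v \<ge> 0) \<and>
      (\<forall>h\<in>H. (\<Sum>v\<in>h \<inter> {v. g v \<noteq> 0}. g v) \<ge> 1)}"

end

theory Submission
  imports Defs
begin

(* Construction, for d \<ge> 1: 2d edges h_0, ..., h_(2d-1), one for each vertex of the complete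
   graph K_(2d).  On line i the edge h_v is the unit interval [p_i(v), p_i(v) + 1], where
   p_i is a bijection from {0..<2d} onto {0..<2d}: reduce v - i to its representative a in
   (-d, d] modulo 2d and list the representatives in the zigzag order 0, 1, -1, 2, -2, ..., d.
   Representatives a, b with a + b \<in> {0, 1} are neighbours in this order, and for u \<noteq> v
   there is a line i with u + v - 2i \<equiv> 0 or 1 (mod 2d); so any two edges meet and \<nu>(H) = 1.
   Since p_i is injective, every point lies in at most two edges, and double counting gives
   \<tau>*(H) \<ge> 2d/2 = d; the d points 1, 3, ..., 2d-1 of line 0 form a transversal, so \<tau>(H) \<le> d.
   As a transversal is a fractional cover, \<tau>* \<le> \<tau>, and all three numbers are pinned down.
   The file first proves the general facts (intersecting families, the LP certificate for
   \<tau> = \<tau>*, double counting), then the combinatorics of the positions, then the theorem. *)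

definition transversal :: "'v set \<Rightarrow> 'v set set \<Rightarrow> 'v set \<Rightarrow> bool" where
  "transversal V H T \<longleftrightarrow> T \<subseteq> V \<and> finite T \<and> (\<forall>h\<in>H. h \<inter> T \<noteq> {})"

definition fractional_cover :: "'v set \<Rightarrow> 'v set set \<Rightarrow> ('v \<Rightarrow> real) \<Rightarrow> bool" where
  "fractional_cover V H g \<longleftrightarrow> finite {v. g v \<noteq> 0} \<and> {v. g v \<noteq> 0} \<subseteq> V \<and> (\<forall>v. g v \<ge> 0) \<and>
     (\<forall>h\<in>H. (\<Sum>v\<in>h \<inter> {v. g v \<noteq> 0}. g v) \<ge> 1)"

definition weight :: "('v \<Rightarrow> real) \<Rightarrow> real" where
  "weight g = (\<Sum>v\<in>{v. g v \<noteq> 0}. g v)"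

lemma matching_num_intersecting:
  assumes nonempty: "H \<noteq> {}"
    and intersecting: "\<And>e f. e \<in> H \<Longrightarrow> f \<in> H \<Longrightarrow> e \<noteq> f \<Longrightarrow> e \<inter> f \<noteq> {}"
  shows "matching_num H = 1"
  unfolding matching_num_def
proof (rule Max_eqI)
  let ?M = "{card F | F. F \<subseteq> H \<and> (\<forall>e\<in>F. \<forall>f\<in>F. e \<noteq> f \<longrightarrow> e \<inter> f = {})}"
  show small: "y \<le> 1" if "y \<in> ?M" for y
  proof -
    from that obtain F where F: "y = card F" "F \<subseteq> H" "\<forall>e\<in>F. \<forall>f\<in>F. e \<noteq> f \<longrightarrow> e \<inter> f = {}"
      by blast
    have "e = f" if "e \<in> F" "f \<in> F" for e f using that F(2,3) intersecting[of e f] by blast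
    then have "card F \<le> Suc 0" by (cases "finite F") (simp_all add: card_le_Suc0_iff_eq)
    then show ?thesis using F(1) by simp
  qed
  have "?M \<subseteq> {..1}" using small by (simp only: subset_iff atMost_iff) blast
  then show "finite ?M" by (rule finite_subset) simp
  obtain e where "e \<in> H" using nonempty by blast
  then show "1 \<in> ?M" by (intro CollectI exI[of _ "{e}"]) auto
qed

lemma transversal_fractional_cover:
  assumes "transversal V H T"
  defines "g \<equiv> \<lambda>v. if v \<in> T then 1 else 0 :: real"
  shows "fractional_cover V H g" and "weight g = card T"
proof -
  have supp: "{v. g v \<noteq> 0} = T" unfolding g_def by auto
  have hit: "(\<Sum>v\<in>h \<inter> T. g v) \<ge> 1" if "h \<in> H" for h
  proof -
    have "h \<inter> T \<noteq> {}" "finite (h \<inter> T)" using assms(1) that unfolding transversal_def by auto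
    then have "card (h \<inter> T) \<ge> 1" by (simp add: Suc_le_eq card_gt_0_iff)
    then show ?thesis unfolding g_def by simp
  qed
  show "fractional_cover V H g"
    using assms(1) hit unfolding fractional_cover_def transversal_def supp by (auto simp: g_def)
  show "weight g = card T" unfolding weight_def supp by (simp add: g_def)
qed

lemma cover_num_altdef: "cover_num V H = Inf {card T | T. transversal V H T}"
  unfolding cover_num_def transversal_def by simp

lemma frac_cover_num_altdef: "frac_cover_num V H = Inf {weight g | g. fractional_cover V H g}"
  unfolding frac_cover_num_def fractional_cover_def weight_def by simp

lemma cover_nums_eqI:
  assumes T: "transversal V H T" "card T = n"
    and lower: "\<And>g. fractional_cover V H g \<Longrightarrow> weight g \<ge> real n"
  shows "cover_num V H = n" and "frac_cover_num V H = real n"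
proof -
  show "cover_num V H = n"
    unfolding cover_num_altdef
  proof (rule cInf_eq_minimum)
    show "n \<in> {card T | T. transversal V H T}" using T by blast
    fix m assume "m \<in> {card T | T. transversal V H T}"
    then obtain T' where "transversal V H T'" "m = card T'" by blast
    then show "n \<le> m" using lower transversal_fractional_cover by fastforce
  qed
  show "frac_cover_num V H = real n"
    unfolding frac_cover_num_altdef
  proof (rule cInf_eq_minimum)
    show "real n \<in> {weight g | g. fractional_cover V H g}"
      using transversal_fractional_cover[OF T(1)] unfolding T(2)
      by (intro CollectI exI[where x = "\<lambda>v. if v \<in> T then 1 else 0 :: real"]) simp
    fix x assume "x \<in> {weight g | g. fractional_cover V H g}"
    then show "real n \<le> x" using lower by blast
  qed
qed

lemma double_counting:
  fixes E :: "'i \<Rightarrow> 'v set" and g :: "'v \<Rightarrow> real"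
  assumes I: "finite I" and S: "finite S" and nonneg: "\<And>w. g w \<ge> 0"
    and degree: "\<And>w. card {i\<in>I. w \<in> E i} \<le> k"
    and feasible: "\<And>i. i \<in> I \<Longrightarrow> (\<Sum>w\<in>E i \<inter> S. g w) \<ge> 1"
  shows "real (card I) \<le> real k * (\<Sum>w\<in>S. g w)"
proof -
  have "real (card I) = (\<Sum>i\<in>I. 1)" by simp
  also have "\<dots> \<le> (\<Sum>i\<in>I. \<Sum>w\<in>E i \<inter> S. g w)" by (rule sum_mono) (rule feasible)
  also have "\<dots> = (\<Sum>i\<in>I. \<Sum>w\<in>S. if w \<in> E i then g w else 0)"
    by (simp add: sum.inter_restrict[OF S] Int_commute)
  also have "\<dots> = (\<Sum>w\<in>S. \<Sum>i\<in>I. if w \<in> E i then g w else 0)" by (rule sum.swap)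
  also have "\<dots> = (\<Sum>w\<in>S. real (card {i\<in>I. w \<in> E i}) * g w)"
  proof (rule sum.cong[OF refl])
    fix w
    have "(\<Sum>i\<in>I. if w \<in> E i then g w else 0) = (\<Sum>i\<in>{i\<in>I. w \<in> E i}. g w)"
      by (rule sum.inter_filter[OF I, symmetric])
    then show "(\<Sum>i\<in>I. if w \<in> E i then g w else 0) = real (card {i\<in>I. w \<in> E i}) * g w"
      by simp
  qed
  also have "\<dots> \<le> (\<Sum>w\<in>S. real k * g w)"
    by (rule sum_mono, rule mult_right_mono) (use degree nonneg in auto)
  finally show ?thesis by (simp add: sum_distrib_left)
qed

section \<open>Zigzag positions\<close>

text \<open>The zigzag order 0, 1, -1, 2, -2, ... of the integers: zigzag a is the place of a.\<close>

definition zigzag :: "int \<Rightarrow> int" where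
  "zigzag a = 2 * \<bar>a\<bar> - (if a > 0 then 1 else 0)"

lemma zigzag_inj: "zigzag a = zigzag b \<Longrightarrow> a = b"
  unfolding zigzag_def abs_if by presburger

lemma zigzag_neighbours: "a + b = 0 \<or> a + b = 1 \<Longrightarrow> \<bar>zigzag a - zigzag b\<bar> \<le> 1"
  unfolding zigzag_def by (cases "a > 0"; cases "b > 0") (auto simp: abs_if split: if_splits)

definition offset :: "nat \<Rightarrow> nat \<Rightarrow> nat \<Rightarrow> int" where
  "offset d i v = (if int v - int i > int d then int v - int i - 2 * int d else int v - int i)"

definition position :: "nat \<Rightarrow> nat \<Rightarrow> nat \<Rightarrow> int" where
  "position d i v = zigzag (offset d i v)"

lemma offset_cases:
  assumes "v < 2 * d" "i < d"
  shows "offset d i v = int v - int i \<or> offset d i v = int v - int i - 2 * int d"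
    and "- int d < offset d i v" and "offset d i v \<le> int d"
  using assms unfolding offset_def by auto

lemma position_inj:
  assumes "u < 2 * d" "v < 2 * d" "i < d" "position d i u = position d i v"
  shows "u = v"
proof -
  have "offset d i u = offset d i v" using assms(4) zigzag_inj unfolding position_def by blast
  then show ?thesis using offset_cases(1)[OF assms(1,3)] offset_cases(1)[OF assms(2,3)] assms(1,2)
    by (elim disjE) linarith+
qed

lemma position_range:
  assumes "v < 2 * d" "i < d"
  shows "0 \<le> position d i v" and "position d i v \<le> 2 * int d - 1"
  using offset_cases(2,3)[OF assms] unfolding position_def zigzag_def by (auto split: if_splits)

lemma position_neighbours_on_line:
  assumes u: "u < 2 * d" and v: "v < 2 * d" and uv: "u \<noteq> v" and i: "i < d"
    and sum: "int u + int v - 2 * int i \<in> {0, 1, 2 * int d, 2 * int d + 1}"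
  shows "\<bar>position d i u - position d i v\<bar> \<le> 1"
proof -
  have distinct: "offset d i u \<noteq> offset d i v"
    using position_inj[OF u v i] uv unfolding position_def by metis
  have "offset d i u + offset d i v = 0 \<or> offset d i u + offset d i v = 1"
    using offset_cases[OF u i] offset_cases[OF v i] distinct sum by (elim disjE; simp; linarith)
  then show ?thesis unfolding position_def by (rule zigzag_neighbours)
qed

lemma position_neighbours:
  assumes "u < 2 * d" "v < 2 * d" "u \<noteq> v"
  shows "\<exists>i<d. \<bar>position d i u - position d i v\<bar> \<le> 1"
proof (cases "u + v < 2 * d")
  case True
  define i where "i = (u + v) div 2"
  have "i < d" using True unfolding i_def by linarith
  moreover have "u + v = 2 * i \<or> u + v = 2 * i + 1" unfolding i_def by presburger
  then have "int u + int v - 2 * int i \<in> {0, 1, 2 * int d, 2 * int d + 1}" by auto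
  ultimately show ?thesis using position_neighbours_on_line[OF assms] by blast
next
  case False
  define i where "i = (u + v - 2 * d) div 2"
  have "i < d" using False assms unfolding i_def by linarith
  moreover have "u + v = 2 * i + 2 * d \<or> u + v = 2 * i + 1 + 2 * d"
    using False unfolding i_def by presburger
  then have "int u + int v - 2 * int i \<in> {0, 1, 2 * int d, 2 * int d + 1}" by auto
  ultimately show ?thesis using position_neighbours_on_line[OF assms] by blast
qed

section \<open>The hypergraph\<close>

definition edge :: "nat \<Rightarrow> nat \<Rightarrow> (nat \<times> real) set" where
  "edge d v = {(i, y). i < d \<and> of_int (position d i v) \<le> y \<and> y \<le> of_int (position d i v) + 1}"

lemma edge_sep_d_interval: "sep_d_interval d (edge d v)"
  unfolding sep_d_interval_def
proof (intro conjI allI impI)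
  show "edge d v \<subseteq> vertices d" unfolding edge_def vertices_def by auto
  fix j assume "j < d"
  then have "{x. (j, x) \<in> edge d v} = {of_int (position d j v) .. of_int (position d j v) + 1}"
    unfolding edge_def by auto
  then show "{x. (j, x) \<in> edge d v} = {} \<or> (\<exists>a b. a \<le> b \<and> {x. (j, x) \<in> edge d v} = {a..b})"
    by auto
qed

text \<open>Any two distinct edges meet, on a line where their positions are neighbours.\<close>

lemma edges_meet:
  assumes "u < 2 * d" "v < 2 * d" "u \<noteq> v"
  shows "edge d u \<inter> edge d v \<noteq> {}"
proof -
  obtain i where i: "i < d" "\<bar>position d i u - position d i v\<bar> \<le> 1"
    using position_neighbours[OF assms] by blast
  define m where "m = max (position d i u) (position d i v)"
  have "position d i u \<le> m" "m \<le> position d i u + 1" "position d i v \<le> m" "m \<le> position d i v + 1"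
    using i(2) unfolding m_def by auto
  then have "(i, real_of_int m) \<in> edge d u \<inter> edge d v"
    using i(1) unfolding edge_def by simp
  then show ?thesis by blast
qed

text \<open>Each point lies in at most two edges: on its line it sees only positions
  \<lfloor>y\<rfloor> - 1 and \<lfloor>y\<rfloor>, each taken by one edge.\<close>

lemma edge_degree: "card {v\<in>{..<2 * d}. w \<in> edge d v} \<le> 2"
proof (cases w)
  case (Pair i y)
  let ?A = "{v\<in>{..<2 * d}. w \<in> edge d v}"
  show ?thesis
  proof (cases "i < d")
    case False
    then have "?A = {}" using Pair by (auto simp: edge_def)
    then show ?thesis by (metis card.empty le0)
  next
    case True
    have "inj_on (position d i) ?A" using position_inj[OF _ _ True] by (auto intro: inj_onI)
    moreover have "position d i ` ?A \<subseteq> {\<lfloor>y\<rfloor> - 1, \<lfloor>y\<rfloor>}"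
    proof
      fix p assume "p \<in> position d i ` ?A"
      then have "of_int p \<le> y" "y \<le> of_int p + 1" using Pair by (auto simp: edge_def)
      then have "p \<le> \<lfloor>y\<rfloor>" "\<lfloor>y\<rfloor> \<le> p + 1" by (simp add: le_floor_iff, simp add: floor_le_iff)
      then show "p \<in> {\<lfloor>y\<rfloor> - 1, \<lfloor>y\<rfloor>}" by auto
    qed
    ultimately have "card ?A \<le> card {\<lfloor>y\<rfloor> - 1, \<lfloor>y\<rfloor>}" by (intro card_inj_on_le) auto
    also have "\<dots> \<le> 2" by (simp add: card_insert_if)
    finally show ?thesis .
  qed
qed

definition odd_points :: "nat \<Rightarrow> (nat \<times> real) set" where
  "odd_points d = (\<lambda>t. (0, real (2 * t + 1))) ` {..<d}"

lemma card_odd_points: "card (odd_points d) = d"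
  unfolding odd_points_def by (subst card_image) (auto simp: inj_on_def)

lemma odd_points_transversal:
  assumes "d \<ge> 1"
  shows "transversal (vertices d) (edge d ` {..<2 * d}) (odd_points d)"
  unfolding transversal_def
proof (intro conjI ballI)
  show "odd_points d \<subseteq> vertices d" "finite (odd_points d)"
    using assms unfolding odd_points_def vertices_def by auto
  fix h assume "h \<in> edge d ` {..<2 * d}"
  then obtain v where v: "h = edge d v" "v < 2 * d" by blast
  have d: "0 < d" using assms by simp
  obtain n where n: "position d 0 v = int n"
    using position_range(1)[OF v(2) d] zero_le_imp_eq_int by blast
  define t where "t = n div 2"
  have "t < d" using position_range(2)[OF v(2) d] n unfolding t_def by linarith
  then have "(0, real (2 * t + 1)) \<in> odd_points d" unfolding odd_points_def by auto
  moreover have "2 * t + 1 = n \<or> 2 * t + 1 = n + 1" unfolding t_def by presburger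
  then have "(0, real (2 * t + 1)) \<in> h" using assms n v(1) unfolding edge_def by auto
  ultimately show "h \<inter> odd_points d \<noteq> {}" by blast
qed

text \<open>By double counting with degree 2, every fractional cover has weight at least d.\<close>

lemma fractional_cover_weight:
  assumes "fractional_cover V (edge d ` {..<2 * d}) g"
  shows "weight g \<ge> real d"
proof -
  have "real (card {..<2 * d}) \<le> real 2 * (\<Sum>w\<in>{v. g v \<noteq> 0}. g w)"
    by (rule double_counting[where E = "edge d"]) (use assms edge_degree in \<open>auto simp: fractional_cover_def\<close>)
  then show ?thesis unfolding weight_def by simp
qed

theorem mainTheorem14:
  fixes d :: nat
  assumes "d \<ge> 1"
  shows "\<exists>H. hypergraph_sep d H \<and> matching_num H = 1 \<and>
           cover_num (vertices d) H = d \<and> frac_cover_num (vertices d) H = real d"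
proof (intro exI conjI)
  let ?H = "edge d ` {..<2 * d}"
  show "hypergraph_sep d ?H"
    unfolding hypergraph_sep_def using edge_sep_d_interval by blast
  show "matching_num ?H = 1"
  proof (rule matching_num_intersecting)
    show "?H \<noteq> {}" using assms by (simp add: lessThan_empty_iff)
    show "e \<inter> f \<noteq> {}" if "e \<in> ?H" "f \<in> ?H" "e \<noteq> f" for e f
      using that edges_meet by blast
  qed
  show "cover_num (vertices d) ?H = d" "frac_cover_num (vertices d) ?H = real d"
    using cover_nums_eqI[OF odd_points_transversal[OF assms] card_odd_points] fractional_cover_weight
    by auto
qed

end
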